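(* Let $S_3$ be the simple undirected graph on vertex set $\{1,2,\dots,16\}$ whose edges are the path edges $\{j,j+1\}$ for $j=1,\dots,15$ together with the five edges $\{1,5\},\{1,13\},\{3,12\},\{4,8\},\{9,16\}$. Designate incoming vertices $i_1=1,\ i_2=6,\ i_3=8$ and outgoing vertices $o_1=16,\ o_2=11,\ o_3=14$. Let $G$ be any finite simple undirected graph that contains $S_3$ as an induced subgraph, has at least one vertex not in $S_3$, and is such that every edge of $G$ joining a vertex of $S_3$ to a vertex outside $S_3$ has its endpoint in $S_3$ belonging to $\{i_1,i_2,i_3,o_1,o_2,o_3\}$. Then for every Hamiltonian cycle $H$ of $G$, the edges of $H$ having both endpoints in $S_3$ form a single path that visits every vertex of $S_3$ (i.e. $H$ enters $S_3$ exactly once, traverses all of it, and leaves), and the two endpoints of this path are $i_k$ and $o_k$ for some $k\in\{1,2,3\}$.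
   Context: A Hamiltonian cycle of a graph is a cycle passing through every vertex exactly once. This is the "in-out property" for the subgraph $S_3$: each copy of it behaves like a single vertex in any Hamiltonian cycle, and a cycle entering at the $k$-th incoming vertex must leave at the $k$-th outgoing vertex. *)

theory Defs
  imports Main
begin

definition S3_base_edge :: "nat \<Rightarrow> nat \<Rightarrow> bool" where
  "S3_base_edge i j \<longleftrightarrow>
     (1 \<le> i \<and> i \<le> 15 \<and> j = i + 1) \<or>
     (i, j) \<in> {(1,5), (1,13), (3,12), (4,8), (9,16)}"

definition S3_edge :: "nat \<Rightarrow> nat \<Rightarrow> bool" where
  "S3_edge i j \<longleftrightarrow> S3_base_edge i j \<or> S3_base_edge j i"

definition S3_verts :: "nat set" where
  "S3_verts = {1..16}"

fun S3_in :: "nat \<Rightarrow> nat" where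
  "S3_in (Suc 0) = 1" | "S3_in (Suc (Suc 0)) = 6" | "S3_in _ = 8"

fun S3_out :: "nat \<Rightarrow> nat" where
  "S3_out (Suc 0) = 16" | "S3_out (Suc (Suc 0)) = 11" | "S3_out _ = 14"

definition S3_terminals :: "nat set" where
  "S3_terminals = {1, 6, 8, 16, 11, 14}"

definition simple_graph :: "'a set \<Rightarrow> ('a \<Rightarrow> 'a \<Rightarrow> bool) \<Rightarrow> bool" where
  "simple_graph V E \<longleftrightarrow> finite V \<and>
     (\<forall>x y. E x y \<longrightarrow> x \<in> V \<and> y \<in> V \<and> x \<noteq> y \<and> E y x)"

definition ham_cycle :: "'a set \<Rightarrow> ('a \<Rightarrow> 'a \<Rightarrow> bool) \<Rightarrow> 'a list \<Rightarrow> bool" where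
  "ham_cycle V E cs \<longleftrightarrow> distinct cs \<and> set cs = V \<and> length cs \<ge> 3 \<and>
     (\<forall>i < length cs. E (cs ! i) (cs ! ((i + 1) mod length cs)))"

definition cycle_edges :: "'a list \<Rightarrow> 'a set set" where
  "cycle_edges cs = {{cs ! i, cs ! ((i + 1) mod length cs)} | i. i < length cs}"

definition path_edges :: "'a list \<Rightarrow> 'a set set" where
  "path_edges ps = {{ps ! i, ps ! (i + 1)} | i. i + 1 < length ps}"

end

(* Pull the edges of H inside the gadget back to S3. In this trace every vertex has degree at most
   two, the ten non-terminal vertices have degree exactly two (their H-neighbours cannot lie
   outside), and there is no cycle: a cycle would be closed under H-adjacency, hence contain all of
   H and in particular the vertex outside S3. A finite case analysis on these constraints, which
   only needs to exclude seven particular cycles, leaves three possible traces: Hamiltonian paths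
   of S3 from i_k to o_k. *)

theory Submission
  imports Defs
begin

section \<open>Cycles and paths given by vertex lists\<close>

lemma mod_less_bound: "(j::nat) < n \<Longrightarrow> k mod n < n"
  by (metis gr_implies_not0 mod_less_divisor neq0_conv)

lemma mod_succ_ne_pred:
  fixes i n :: nat
  assumes "i < n" "3 \<le> n"
  shows "(i + 1) mod n \<noteq> (i + n - 1) mod n"
  using assms by (auto simp: mod_if)

lemma mod_pred_succ:
  fixes i n :: nat
  assumes "i < n"
  shows "((i + n - 1) mod n + 1) mod n = i"
  using assms by (auto simp: mod_if)

lemma mod_succ_eq_iff:
  fixes i j n :: nat
  assumes "i < n" "j < n"
  shows "(j + 1) mod n = i \<longleftrightarrow> j = (i + n - 1) mod n"
  using assms by (auto simp: mod_if)

lemma cycle_edge_nth: "j < length cs \<Longrightarrow> {cs ! j, cs ! ((j + 1) mod length cs)} \<in> cycle_edges cs"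
  unfolding cycle_edges_def by blast

lemma cycle_edges_subset_set: "e \<in> cycle_edges cs \<Longrightarrow> e \<subseteq> set cs"
  unfolding cycle_edges_def using mod_less_bound by fastforce

lemma cycle_edge_nth_iff:
  assumes "distinct cs" "i < length cs"
  shows "{cs ! i, u} \<in> cycle_edges cs \<longleftrightarrow>
    u = cs ! ((i + 1) mod length cs) \<or> u = cs ! ((i + length cs - 1) mod length cs)"
    (is "_ \<longleftrightarrow> u = cs ! ?succ \<or> u = cs ! ?pred")
proof
  assume "{cs ! i, u} \<in> cycle_edges cs"
  then obtain j where j: "j < length cs" "{cs ! i, u} = {cs ! j, cs ! ((j + 1) mod length cs)}"
    by (auto simp: cycle_edges_def)
  then consider "cs ! i = cs ! j" "u = cs ! ((j + 1) mod length cs)"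
    | "cs ! i = cs ! ((j + 1) mod length cs)" "u = cs ! j"
    by (auto simp: doubleton_eq_iff)
  moreover have "(j + 1) mod length cs < length cs" using j(1) by (rule mod_less_bound)
  ultimately show "u = cs ! ?succ \<or> u = cs ! ?pred"
    using assms j(1) mod_succ_eq_iff[OF assms(2) j(1)] by cases (simp_all add: nth_eq_iff_index_eq)
next
  have "{cs ! i, cs ! ?succ} \<in> cycle_edges cs" "{cs ! ?pred, cs ! i} \<in> cycle_edges cs"
    using cycle_edge_nth[of i cs] cycle_edge_nth[OF mod_less_bound[OF assms(2)], of ?pred]
      mod_pred_succ[OF assms(2)] assms(2) by simp_all
  then show "u = cs ! ?succ \<or> u = cs ! ?pred \<Longrightarrow> {cs ! i, u} \<in> cycle_edges cs"
    by (auto simp: insert_commute)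
qed

lemma card_cycle_nbrs:
  assumes "distinct cs" "3 \<le> length cs" "v \<in> set cs"
  shows "card {u. {v, u} \<in> cycle_edges cs} = 2"
proof -
  obtain i where i: "i < length cs" "v = cs ! i"
    using assms(3) by (auto simp: in_set_conv_nth)
  let ?succ = "(i + 1) mod length cs" and ?pred = "(i + length cs - 1) mod length cs"
  have "{u. {v, u} \<in> cycle_edges cs} = {cs ! ?succ, cs ! ?pred}"
    using cycle_edge_nth_iff[OF assms(1) i(1)] i(2) by auto
  moreover have "?succ < length cs" "?pred < length cs" using i(1) by (rule mod_less_bound)+
  moreover have "cs ! ?succ \<noteq> cs ! ?pred"
    using mod_succ_ne_pred[OF i(1) assms(2)] calculation(2,3)
    by (simp add: nth_eq_iff_index_eq assms(1))
  ultimately show ?thesis by simp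
qed

lemma cycle_edges_closed_subset:
  assumes "v \<in> set cs" "v \<in> W"
    and closed: "\<And>w u. w \<in> W \<Longrightarrow> {w, u} \<in> cycle_edges cs \<Longrightarrow> u \<in> W"
  shows "set cs \<subseteq> W"
proof
  let ?n = "length cs"
  obtain i where i: "i < ?n" "v = cs ! i"
    using assms(1) by (auto simp: in_set_conv_nth)
  have step: "cs ! ((i + k) mod ?n) \<in> W" for k
  proof (induction k)
    case 0
    then show ?case using i assms(2) by simp
  next
    case (Suc k)
    have "{cs ! ((i + k) mod ?n), cs ! (((i + k) mod ?n + 1) mod ?n)} \<in> cycle_edges cs"
      using cycle_edge_nth[OF mod_less_bound[OF i(1)], of "i + k"] by simp
    then show ?case using closed[OF Suc.IH] by (simp add: mod_Suc_eq)
  qed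
  fix u assume "u \<in> set cs"
  then obtain j where j: "j < ?n" "u = cs ! j" by (auto simp: in_set_conv_nth)
  have "(i + (j + ?n - i)) mod ?n = j" using i(1) j(1) by simp
  then show "u \<in> W" using step[of "j + ?n - i"] j(2) by simp
qed

lemma ham_cycle_edge_adj:
  assumes "simple_graph V E" "ham_cycle V E cs" "{a, b} \<in> cycle_edges cs"
  shows "E a b"
  using assms unfolding simple_graph_def ham_cycle_def cycle_edges_def
  by (auto simp: doubleton_eq_iff)

lemma path_edges_eq_image: "path_edges ps = (\<lambda>i. {ps ! i, ps ! Suc i}) ` {..< length ps - 1}"
  by (auto simp: path_edges_def)

lemma path_edges_Cons2: "path_edges (a # b # xs) = insert {a, b} (path_edges (b # xs))"
  by (simp add: path_edges_eq_image lessThan_Suc_eq_insert_0 image_image)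

lemma path_edges_Nil: "path_edges [] = {}"
  by (simp add: path_edges_def)

lemma path_edges_singleton: "path_edges [a] = {}"
  by (simp add: path_edges_def)

lemma path_edges_map: "path_edges (map f ps) = (`) f ` path_edges ps"
  by (simp add: path_edges_eq_image image_image)

lemma path_edges_successively:
  "successively R ps \<Longrightarrow> {a, b} \<in> path_edges ps \<Longrightarrow> R a b \<or> R b a"
  by (induction ps rule: induct_list012)
    (auto simp: path_edges_Cons2 path_edges_Nil path_edges_singleton doubleton_eq_iff)

section \<open>The gadget\<close>

lemma card_2_doubleton_eq:
  assumes "a \<noteq> b" "card A = 2" "a \<in> A" "b \<in> A"
  shows "A = {a, b}"
proof -
  have "finite A"
    using assms(2) by (simp add: card_ge_0_finite)
  moreover have "{a, b} \<subseteq> A" "card {a, b} = card A"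
    using assms by simp_all
  ultimately show ?thesis
    by (metis card_subset_eq)
qed

lemma card_Collect_2_of_2:
  assumes "card {u. P u} = 2" "{u. P u} \<subseteq> {p, q}"
  shows "P p \<and> P q"
  using assms by (auto simp: card_2_iff)

lemma card_Collect_2_of_3:
  assumes "card {u. P u} = 2" "{u. P u} \<subseteq> {p, q, r}" "distinct [p, q, r]"
  shows "P p \<and> P q \<and> \<not> P r \<or> P p \<and> \<not> P q \<and> P r \<or> \<not> P p \<and> P q \<and> P r"
  using assms by (auto simp: card_2_iff)

lemma card_Collect_le_2_of_3:
  assumes "card {u. P u} \<le> 2" "{u. P u} \<subseteq> {p, q, r}" "distinct [p, q, r]"
  shows "\<not> (P p \<and> P q \<and> P r)"
proof
  assume "P p \<and> P q \<and> P r"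
  then have "{u. P u} = {p, q, r}" using assms(2) by auto
  then show False using assms(1,3) by simp
qed

lemma S3_base_edge_iff:
  "S3_base_edge i j \<longleftrightarrow> (i, j) \<in> {(1,2), (2,3), (3,4), (4,5), (5,6), (6,7), (7,8), (8,9), (9,10),
     (10,11), (11,12), (12,13), (13,14), (14,15), (15,16), (1,5), (1,13), (3,12), (4,8), (9,16)}"
    (is "_ \<longleftrightarrow> _ \<in> ?pairs")
proof
  assume "S3_base_edge i j"
  then consider "1 \<le> i" "i \<le> 15" "j = i + 1"
    | "(i, j) \<in> {(1,5), (1,13), (3,12), (4,8), (9,16)}"
    unfolding S3_base_edge_def by blast
  then show "(i, j) \<in> ?pairs"
  proof cases
    case 1
    then have "i = 1 \<or> i = 2 \<or> i = 3 \<or> i = 4 \<or> i = 5 \<or> i = 6 \<or> i = 7 \<or> i = 8 \<or> i = 9 \<or>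
        i = 10 \<or> i = 11 \<or> i = 12 \<or> i = 13 \<or> i = 14 \<or> i = 15"
      by arith
    then show ?thesis using \<open>j = i + 1\<close> by (elim disjE) simp_all
  qed auto
next
  show "(i, j) \<in> ?pairs \<Longrightarrow> S3_base_edge i j"
    unfolding S3_base_edge_def by (elim insertE; simp)
qed

lemma S3_edge_sym: "S3_edge i j \<longleftrightarrow> S3_edge j i"
  by (auto simp: S3_edge_def)

lemma S3_verts_eq: "S3_verts = {1, 2, 3, 4, 5, 6, 7, 8, 9, 10, 11, 12, 13, 14, 15, 16}"
  unfolding S3_verts_def by (auto; arith)

lemma S3_nbrs:
  "{u. S3_edge 1 u} = {2, 5, 13}" "{u. S3_edge 2 u} = {1, 3}" "{u. S3_edge 3 u} = {2, 4, 12}"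
  "{u. S3_edge 4 u} = {3, 5, 8}" "{u. S3_edge 5 u} = {1, 4, 6}" "{u. S3_edge 6 u} = {5, 7}"
  "{u. S3_edge 7 u} = {6, 8}" "{u. S3_edge 8 u} = {4, 7, 9}" "{u. S3_edge 9 u} = {8, 10, 16}"
  "{u. S3_edge 10 u} = {9, 11}" "{u. S3_edge 11 u} = {10, 12}" "{u. S3_edge 12 u} = {3, 11, 13}"
  "{u. S3_edge 13 u} = {1, 12, 14}" "{u. S3_edge 14 u} = {13, 15}" "{u. S3_edge 15 u} = {14, 16}"
  "{u. S3_edge 16 u} = {9, 15}"
  by (auto simp: S3_edge_def S3_base_edge_iff)

lemma S3_in_out:
  "S3_in 1 = 1" "S3_out 1 = 16" "S3_in 2 = 6" "S3_out 2 = 11" "S3_in 3 = 8" "S3_out 3 = 14"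
  by (simp_all add: numeral_eq_Suc)

lemma S3_rel_eqI:
  assumes "\<And>u v. x u v \<Longrightarrow> S3_edge u v" "\<And>u v. y u v \<Longrightarrow> S3_edge u v"
    and "\<And>u v. x u v \<longleftrightarrow> x v u" "\<And>u v. y u v \<longleftrightarrow> y v u"
    and "\<And>i j. S3_base_edge i j \<Longrightarrow> x i j \<longleftrightarrow> y i j"
  shows "x = y"
  using assms unfolding S3_edge_def by (intro ext) metis

definition S3_path :: "nat \<Rightarrow> nat list" where
  "S3_path k =
    (if k = 1 then [1, 2, 3, 4, 5, 6, 7, 8, 9, 10, 11, 12, 13, 14, 15, 16]
     else if k = 2 then [6, 7, 8, 4, 5, 1, 2, 3, 12, 13, 14, 15, 16, 9, 10, 11]
     else [8, 7, 6, 5, 4, 3, 2, 1, 13, 12, 11, 10, 9, 16, 15, 14])"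

lemma S3_path_spanning: "distinct (S3_path k)" "set (S3_path k) = S3_verts"
  by (simp_all add: S3_path_def S3_verts_eq insert_commute)

lemma S3_path_ends:
  "k \<in> {1, 2, 3} \<Longrightarrow> {hd (S3_path k), last (S3_path k)} = {S3_in k, S3_out k}"
  by (auto simp: S3_path_def S3_in_out)

lemma S3_path_edge:
  assumes "{a, b} \<in> path_edges (S3_path k)"
  shows "S3_edge a b"
proof -
  have "successively S3_edge (S3_path k)"
    by (simp add: S3_path_def S3_edge_def S3_base_edge_def)
  then show ?thesis
    using path_edges_successively[OF _ assms] S3_edge_sym by metis
qed

lemma S3_trace_degrees:
  fixes x :: "nat \<Rightarrow> nat \<Rightarrow> bool"
  assumes edge: "\<And>u v. x u v \<Longrightarrow> S3_edge u v"
    and deg_le: "\<And>v. card {u. x v u} \<le> 2"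
    and deg_eq: "\<And>v. v \<in> S3_verts - S3_terminals \<Longrightarrow> card {u. x v u} = 2"
  shows "\<not> (x 1 2 \<and> x 1 5 \<and> x 1 13)" (is ?at1)
    and "x 2 1 \<and> x 2 3" (is ?at2)
    and "x 3 2 \<and> x 3 4 \<and> \<not> x 3 12 \<or> x 3 2 \<and> \<not> x 3 4 \<and> x 3 12 \<or>
      \<not> x 3 2 \<and> x 3 4 \<and> x 3 12" (is ?at3)
    and "x 4 3 \<and> x 4 5 \<and> \<not> x 4 8 \<or> x 4 3 \<and> \<not> x 4 5 \<and> x 4 8 \<or>
      \<not> x 4 3 \<and> x 4 5 \<and> x 4 8" (is ?at4)
    and "x 5 1 \<and> x 5 4 \<and> \<not> x 5 6 \<or> x 5 1 \<and> \<not> x 5 4 \<and> x 5 6 \<or>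
      \<not> x 5 1 \<and> x 5 4 \<and> x 5 6" (is ?at5)
    and "x 7 6 \<and> x 7 8" (is ?at7)
    and "\<not> (x 8 4 \<and> x 8 7 \<and> x 8 9)" (is ?at8)
    and "x 9 8 \<and> x 9 10 \<and> \<not> x 9 16 \<or> x 9 8 \<and> \<not> x 9 10 \<and> x 9 16 \<or>
      \<not> x 9 8 \<and> x 9 10 \<and> x 9 16" (is ?at9)
    and "x 10 9 \<and> x 10 11" (is ?at10)
    and "x 12 3 \<and> x 12 11 \<and> \<not> x 12 13 \<or> x 12 3 \<and> \<not> x 12 11 \<and> x 12 13 \<or>
      \<not> x 12 3 \<and> x 12 11 \<and> x 12 13" (is ?at12)
    and "x 13 1 \<and> x 13 12 \<and> \<not> x 13 14 \<or> x 13 1 \<and> \<not> x 13 12 \<and> x 13 14 \<or>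
      \<not> x 13 1 \<and> x 13 12 \<and> x 13 14" (is ?at13)
    and "x 15 14 \<and> x 15 16" (is ?at15)
proof -
  have nbrs: "{u. x v u} \<subseteq> {u. S3_edge v u}" for v
    using edge by blast
  have two_nbrs: "card {u. x v u} = 2" if "v \<in> {2, 3, 4, 5, 7, 9, 10, 12, 13, 15}" for v
    using deg_eq that by (auto simp: S3_verts_def S3_terminals_def)
  show ?at1
    by (rule card_Collect_le_2_of_3[where P = "x 1"])
      (use deg_le nbrs[of 1, unfolded S3_nbrs] in simp_all)
  show ?at2
    by (rule card_Collect_2_of_2[where P = "x 2"])
      (use two_nbrs nbrs[of 2, unfolded S3_nbrs] in simp_all)
  show ?at3
    by (rule card_Collect_2_of_3[where P = "x 3"])
      (use two_nbrs nbrs[of 3, unfolded S3_nbrs] in simp_all)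
  show ?at4
    by (rule card_Collect_2_of_3[where P = "x 4"])
      (use two_nbrs nbrs[of 4, unfolded S3_nbrs] in simp_all)
  show ?at5
    by (rule card_Collect_2_of_3[where P = "x 5"])
      (use two_nbrs nbrs[of 5, unfolded S3_nbrs] in simp_all)
  show ?at7
    by (rule card_Collect_2_of_2[where P = "x 7"])
      (use two_nbrs nbrs[of 7, unfolded S3_nbrs] in simp_all)
  show ?at8
    by (rule card_Collect_le_2_of_3[where P = "x 8"])
      (use deg_le nbrs[of 8, unfolded S3_nbrs] in simp_all)
  show ?at9
    by (rule card_Collect_2_of_3[where P = "x 9"])
      (use two_nbrs nbrs[of 9, unfolded S3_nbrs] in simp_all)
  show ?at10
    by (rule card_Collect_2_of_2[where P = "x 10"])
      (use two_nbrs nbrs[of 10, unfolded S3_nbrs] in simp_all)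
  show ?at12
    by (rule card_Collect_2_of_3[where P = "x 12"])
      (use two_nbrs nbrs[of 12, unfolded S3_nbrs] in simp_all)
  show ?at13
    by (rule card_Collect_2_of_3[where P = "x 13"])
      (use two_nbrs nbrs[of 13, unfolded S3_nbrs] in simp_all)
  show ?at15
    by (rule card_Collect_2_of_2[where P = "x 15"])
      (use two_nbrs nbrs[of 15, unfolded S3_nbrs] in simp_all)
qed

lemma S3_trace_no_cycles:
  fixes x :: "nat \<Rightarrow> nat \<Rightarrow> bool"
  assumes sym: "\<And>u v. x u v \<longleftrightarrow> x v u"
    \<comment> \<open>acyclicity: a nonempty set where each vertex has two neighbours inside carries a cycle\<close>
    and acyclic: "\<And>C. \<forall>w\<in>C. \<exists>a\<in>C. \<exists>b\<in>C. a \<noteq> b \<and> x w a \<and> x w b \<Longrightarrow> C = {}"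
  shows "\<not> (x 1 2 \<and> x 2 3 \<and> x 3 4 \<and> x 4 5 \<and> x 5 1)" (is ?cyc1)
    and "\<not> (x 1 2 \<and> x 2 3 \<and> x 3 12 \<and> x 12 13 \<and> x 13 1)" (is ?cyc2)
    and "\<not> (x 4 5 \<and> x 5 6 \<and> x 6 7 \<and> x 7 8 \<and> x 8 4)" (is ?cyc3)
    and "\<not> (x 1 2 \<and> x 2 3 \<and> x 3 4 \<and> x 4 8 \<and> x 8 7 \<and> x 7 6 \<and> x 6 5 \<and> x 5 1)" (is ?cyc4)
    and "\<not> (x 9 10 \<and> x 10 11 \<and> x 11 12 \<and> x 12 13 \<and> x 13 14 \<and> x 14 15 \<and> x 15 16 \<and> x 16 9)" (is ?cyc5)
    and "\<not> (x 1 2 \<and> x 2 3 \<and> x 3 12 \<and> x 12 11 \<and> x 11 10 \<and> x 10 9 \<and> x 9 16 \<and> x 16 15 \<and>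
      x 15 14 \<and> x 14 13 \<and> x 13 1)" (is ?cyc6)
    and "\<not> (x 1 2 \<and> x 2 3 \<and> x 3 4 \<and> x 4 5 \<and> x 5 6 \<and> x 6 7 \<and> x 7 8 \<and> x 8 9 \<and> x 9 10 \<and>
      x 10 11 \<and> x 11 12 \<and> x 12 13 \<and> x 13 1)" (is ?cyc7)
proof -
  have no_cycle: "\<not> (\<forall>w\<in>C. \<exists>a\<in>C. \<exists>b\<in>C. a \<noteq> b \<and> x w a \<and> x w b)" if "C \<noteq> {}" for C
    using acyclic that by blast
  show ?cyc1
    using no_cycle[of "{1, 2, 3, 4, 5}"] sym by auto
  show ?cyc2
    using no_cycle[of "{1, 2, 3, 12, 13}"] sym by auto
  show ?cyc3
    using no_cycle[of "{4, 5, 6, 7, 8}"] sym by auto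
  show ?cyc4
    using no_cycle[of "{1, 2, 3, 4, 8, 7, 6, 5}"] sym by auto
  show ?cyc5
    using no_cycle[of "{9, 10, 11, 12, 13, 14, 15, 16}"] sym by auto
  show ?cyc6
    using no_cycle[of "{1, 2, 3, 12, 11, 10, 9, 16, 15, 14, 13}"] sym by auto
  show ?cyc7
    using no_cycle[of "{1, 2, 3, 4, 5, 6, 7, 8, 9, 10, 11, 12, 13}"] sym by auto
qed

lemma S3_trace_eq_path:
  fixes x :: "nat \<Rightarrow> nat \<Rightarrow> bool"
  assumes edge: "\<And>u v. x u v \<Longrightarrow> S3_edge u v"
    and sym: "\<And>u v. x u v \<longleftrightarrow> x v u"
    and deg_le: "\<And>v. card {u. x v u} \<le> 2"
    and deg_eq: "\<And>v. v \<in> S3_verts - S3_terminals \<Longrightarrow> card {u. x v u} = 2"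
    and acyclic: "\<And>C. \<forall>w\<in>C. \<exists>a\<in>C. \<exists>b\<in>C. a \<noteq> b \<and> x w a \<and> x w b \<Longrightarrow> C = {}"
  shows "\<exists>k\<in>{1, 2, 3}. x = (\<lambda>a b. {a, b} \<in> path_edges (S3_path k))"
proof -
  have "\<exists>k\<in>{1, 2, 3}.
    \<forall>i j. S3_base_edge i j \<longrightarrow> (x i j \<longleftrightarrow> {i, j} \<in> path_edges (S3_path k))"
    \<comment> \<open>in the twenty edge variables these constraints have exactly three solutions\<close>
    by (simp add: S3_base_edge_iff S3_path_def path_edges_Cons2 path_edges_singleton
        doubleton_eq_iff all_conj_distrib imp_conjL del: One_nat_def)
      (use S3_trace_degrees[of x, OF edge deg_le deg_eq] S3_trace_no_cycles[of x, OF sym acyclic]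
        sym in \<open>smt (verit)\<close>)
  then obtain k where k: "k \<in> {1, 2, 3}"
    and agree: "\<forall>i j. S3_base_edge i j \<longrightarrow> (x i j \<longleftrightarrow> {i, j} \<in> path_edges (S3_path k))"
    by blast
  have "x = (\<lambda>a b. {a, b} \<in> path_edges (S3_path k))"
    by (rule S3_rel_eqI) (use edge sym S3_path_edge agree in \<open>auto simp: insert_commute\<close>)
  with k show ?thesis by blast
qed

section \<open>A Hamiltonian cycle through the gadget\<close>

locale S3_gadget_in_ham_cycle =
  fixes V :: "'a set" and E :: "'a \<Rightarrow> 'a \<Rightarrow> bool" and f :: "nat \<Rightarrow> 'a" and H :: "'a list"
  assumes graph: "simple_graph V E"
    and emb: "inj_on f S3_verts" "f ` S3_verts \<subseteq> V"
    and induced: "\<forall>i \<in> S3_verts. \<forall>j \<in> S3_verts. E (f i) (f j) \<longleftrightarrow> S3_edge i j"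
    and outside: "\<exists>v \<in> V. v \<notin> f ` S3_verts"
    and boundary: "\<forall>i \<in> S3_verts. \<forall>y \<in> V. y \<notin> f ` S3_verts \<longrightarrow> E (f i) y \<longrightarrow> i \<in> S3_terminals"
    and ham: "ham_cycle V E H"
begin

definition cycle_trace :: "nat \<Rightarrow> nat \<Rightarrow> bool" where
  "cycle_trace a b \<longleftrightarrow> a \<in> S3_verts \<and> b \<in> S3_verts \<and> {f a, f b} \<in> cycle_edges H"

lemma cycle_trace_sym: "cycle_trace a b \<longleftrightarrow> cycle_trace b a"
  by (auto simp: cycle_trace_def insert_commute)

lemma cycle_trace_S3_edge:
  assumes "cycle_trace a b"
  shows "S3_edge a b"
proof -
  have "a \<in> S3_verts" "b \<in> S3_verts" "{f a, f b} \<in> cycle_edges H"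
    using assms by (simp_all add: cycle_trace_def)
  then show ?thesis
    using induced ham_cycle_edge_adj[OF graph ham] by blast
qed

lemma card_cycle_nbrs_gadget: "v \<in> S3_verts \<Longrightarrow> card {w. {f v, w} \<in> cycle_edges H} = 2"
  using ham emb(2) card_cycle_nbrs[of H "f v"] by (auto simp: ham_cycle_def)

lemma cycle_trace_nbrs_image: "f ` {u. cycle_trace v u} \<subseteq> {w. {f v, w} \<in> cycle_edges H}"
  by (auto simp: cycle_trace_def)

lemma inj_on_cycle_trace_nbrs: "inj_on f {u. cycle_trace v u}"
  using emb(1) by (rule inj_on_subset) (auto simp: cycle_trace_def)

lemma card_cycle_trace_nbrs_le: "card {u. cycle_trace v u} \<le> 2"
proof (cases "v \<in> S3_verts")
  case True
  then have "card (f ` {u. cycle_trace v u}) \<le> 2"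
    using cycle_trace_nbrs_image card_cycle_nbrs_gadget[OF True]
    by (metis card.infinite card_mono zero_neq_numeral)
  then show ?thesis
    by (simp add: card_image inj_on_cycle_trace_nbrs)
next
  case False
  then show ?thesis by (simp add: cycle_trace_def)
qed

lemma card_cycle_trace_nbrs_eq:
  assumes "v \<in> S3_verts - S3_terminals"
  shows "card {u. cycle_trace v u} = 2"
proof -
  have "{w. {f v, w} \<in> cycle_edges H} \<subseteq> f ` {u. cycle_trace v u}"
  proof
    fix w assume "w \<in> {w. {f v, w} \<in> cycle_edges H}"
    then have vw: "{f v, w} \<in> cycle_edges H" by simp
    have "w \<in> V"
      using cycle_edges_subset_set[OF vw] ham by (simp add: ham_cycle_def)
    moreover have "E (f v) w"
      using ham_cycle_edge_adj[OF graph ham vw] .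
    ultimately obtain u where "u \<in> S3_verts" "w = f u"
      using boundary assms by blast
    then show "w \<in> f ` {u. cycle_trace v u}"
      using assms vw by (auto simp: cycle_trace_def)
  qed
  then have "f ` {u. cycle_trace v u} = {w. {f v, w} \<in> cycle_edges H}"
    using cycle_trace_nbrs_image by blast
  moreover have "card {w. {f v, w} \<in> cycle_edges H} = 2"
    using assms by (simp add: card_cycle_nbrs_gadget)
  ultimately show ?thesis
    by (metis card_image inj_on_cycle_trace_nbrs)
qed

lemma cycle_trace_acyclic:
  assumes "\<forall>w\<in>C. \<exists>a\<in>C. \<exists>b\<in>C. a \<noteq> b \<and> cycle_trace w a \<and> cycle_trace w b"
  shows "C = {}"
proof (rule ccontr)
  assume "C \<noteq> {}"
  then obtain w0 where w0: "w0 \<in> C" by blast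
  have C_sub: "C \<subseteq> S3_verts"
    using assms by (auto simp: cycle_trace_def)
  have closed: "u \<in> f ` C" if w': "w' \<in> f ` C" and e: "{w', u} \<in> cycle_edges H" for w' u
  proof -
    obtain w where w: "w \<in> C" "w' = f w" using w' by blast
    then obtain a b where ab: "a \<in> C" "b \<in> C" "a \<noteq> b" "cycle_trace w a" "cycle_trace w b"
      using assms by blast
    have "f a \<noteq> f b"
      using ab C_sub emb(1) by (auto dest: inj_onD)
    moreover have "card {x. {f w, x} \<in> cycle_edges H} = 2"
      using w C_sub by (auto intro: card_cycle_nbrs_gadget)
    moreover have "f a \<in> {x. {f w, x} \<in> cycle_edges H}" "f b \<in> {x. {f w, x} \<in> cycle_edges H}"
      using ab(4,5) by (auto simp: cycle_trace_def)
    ultimately have "{x. {f w, x} \<in> cycle_edges H} = {f a, f b}"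
      by (rule card_2_doubleton_eq)
    then show ?thesis
      using e w ab(1,2) by blast
  qed
  have "V = set H"
    using ham by (simp add: ham_cycle_def)
  then have "V \<subseteq> f ` C"
    using cycle_edges_closed_subset[of "f w0" H "f ` C"] closed w0 C_sub emb(2) by blast
  then show False
    using outside C_sub by blast
qed

lemma cycle_edges_in_gadget:
  "{e \<in> cycle_edges H. e \<subseteq> f ` S3_verts} = (`) f ` {{a, b} | a b. cycle_trace a b}"
proof (intro set_eqI iffI)
  fix e assume e: "e \<in> {e \<in> cycle_edges H. e \<subseteq> f ` S3_verts}"
  then obtain p q where "e = {p, q}"
    by (auto simp: cycle_edges_def)
  with e obtain a b where "a \<in> S3_verts" "b \<in> S3_verts" "e = f ` {a, b}"
    by auto
  with e show "e \<in> (`) f ` {{a, b} | a b. cycle_trace a b}"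
    by (auto simp: cycle_trace_def intro!: image_eqI[where x = "{a, b}"])
qed (auto simp: cycle_trace_def)

end

theorem mainTheorem1:
  fixes V :: "'a set" and E :: "'a \<Rightarrow> 'a \<Rightarrow> bool" and f :: "nat \<Rightarrow> 'a"
    and H :: "'a list"
  assumes graph: "simple_graph V E"
    and emb: "inj_on f S3_verts" "f ` S3_verts \<subseteq> V"
    and induced: "\<forall>i \<in> S3_verts. \<forall>j \<in> S3_verts. E (f i) (f j) \<longleftrightarrow> S3_edge i j"
    and outside: "\<exists>v \<in> V. v \<notin> f ` S3_verts"
    and boundary: "\<forall>i \<in> S3_verts. \<forall>y \<in> V. y \<notin> f ` S3_verts \<longrightarrow> E (f i) y \<longrightarrow> i \<in> S3_terminals"
    and ham: "ham_cycle V E H"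
  shows "\<exists>k \<in> {1, 2, 3}. \<exists>p. distinct p \<and> set p = f ` S3_verts \<and>
           path_edges p = {e \<in> cycle_edges H. e \<subseteq> f ` S3_verts} \<and>
           {hd p, last p} = {f (S3_in k), f (S3_out k)}"
proof -
  interpret S3_gadget_in_ham_cycle V E f H
    using assms by (simp add: S3_gadget_in_ham_cycle_def)
  obtain k where k: "k \<in> {1, 2, 3}"
    and trace: "cycle_trace = (\<lambda>a b. {a, b} \<in> path_edges (S3_path k))"
    using S3_trace_eq_path[OF cycle_trace_S3_edge cycle_trace_sym card_cycle_trace_nbrs_le
        card_cycle_trace_nbrs_eq cycle_trace_acyclic] by blast
  let ?p = "map f (S3_path k)"
  have nonempty: "S3_path k \<noteq> []"
    by (simp add: S3_path_def)
  have doubletons: "{{a, b} | a b. {a, b} \<in> path_edges (S3_path k)} = path_edges (S3_path k)"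
    by (auto simp: path_edges_def)
  have "distinct ?p" "set ?p = f ` S3_verts"
    using S3_path_spanning emb(1) by (auto simp: distinct_map)
  moreover have "path_edges ?p = {e \<in> cycle_edges H. e \<subseteq> f ` S3_verts}"
    using doubletons by (simp add: path_edges_map cycle_edges_in_gadget trace)
  moreover have "{hd ?p, last ?p} = {f (S3_in k), f (S3_out k)}"
    using arg_cong[OF S3_path_ends[OF k], of "image f"] nonempty by (simp add: hd_map last_map)
  ultimately show ?thesis
    using k by blast
qed

end
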